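(* Fix $k\in\{1,\dots,K\}$ and arbitrary matrices $\mathbf{V}_1^{(i)},\dots,\mathbf{V}_G^{(i)}\in\mathbb{C}^{M\times d}$, and let $h_k^{(i)}$ be defined as in the context. Then: (C.a) For all $\mathbf{V}_1,\dots,\mathbf{V}_G\in\mathbb{C}^{M\times d}$, $$h_k^{(i)}(\{\mathbf{V}_g\})\ \ge\ -\log\det\big(\mathbf{I}_N+\mathbf{H}_k\mathbf{V}_{g_k}\mathbf{V}_{g_k}^H\mathbf{H}_k^H\mathbf{J}_k\big),$$ with equality when $\mathbf{V}_g=\mathbf{V}_g^{(i)}$ for all $g=1,\dots,G$. (C.b) At $\{\mathbf{V}_g\}=\{\mathbf{V}_g^{(i)}\}$, the partial derivatives of $h_k^{(i)}$ and of $\{\mathbf{V}_g\}\mapsto-\log\det\big(\mathbf{I}_N+\mathbf{H}_k\mathbf{V}_{g_k}\mathbf{V}_{g_k}^H\mathbf{H}_k^H\mathbf{J}_k\big)$ with respect to the real part and the imaginary part of every entry of every $\mathbf{V}_g$, $g=1,\dots,G$, coincide. Moreover $h_k^{(i)}$ is a convex quadratic function of $\{\mathbf{V}_g\}$.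
   Context: Setting: there are $G$ clusters and $K$ base stations; BS $k$ belongs to cluster $g_k\in\{1,\dots,G\}$. Integers $M>N\ge1$ are given and $d=N$. For each $k$, $\mathbf{H}_k\in\mathbb{C}^{N\times M}$ is fixed and $\sigma_k^2>0$. Variables $\mathbf{V}_g\in\mathbb{C}^{M\times d}$, $g=1,\dots,G$. Define $$\mathbf{J}_k=\Big(\sum_{g'\neq g_k}\mathbf{H}_k\mathbf{V}_{g'}\mathbf{V}_{g'}^H\mathbf{H}_k^H+\sigma_k^2\mathbf{I}_N\Big)^{-1},$$ $$\hat{\mathbf{U}}_k^{(i)}=\Big(\sum_{g=1}^G\mathbf{H}_k\mathbf{V}_g^{(i)}(\mathbf{V}_g^{(i)})^H\mathbf{H}_k^H+\sigma_k^2\mathbf{I}_N\Big)^{-1}\mathbf{H}_k\mathbf{V}_{g_k}^{(i)},\qquad \hat{\mathbf{Q}}_k^{(i)}=\mathbf{I}_d-(\hat{\mathbf{U}}_k^{(i)})^H\mathbf{H}_k\mathbf{V}_{g_k}^{(i)},$$ $$\hat{\mathbf{A}}_k^{(i)}=\mathbf{H}_k^H\hat{\mathbf{U}}_k^{(i)}(\hat{\mathbf{Q}}_k^{(i)})^{-1}(\hat{\mathbf{U}}_k^{(i)})^H\mathbf{H}_k,\qquad \hat{\mathbf{B}}_k^{(i)}=-(\hat{\mathbf{Q}}_k^{(i)})^{-1}(\hat{\mathbf{U}}_k^{(i)})^H\mathbf{H}_k,$$ $$\hat b_k^{(i)}=\mathrm{Tr}\Big((\hat{\mathbf{Q}}_k^{(i)})^{-1}\big(\mathbf{I}_d+\sigma_k^2(\hat{\mathbf{U}}_k^{(i)})^H\hat{\mathbf{U}}_k^{(i)}\big)\Big)+\log\det\hat{\mathbf{Q}}_k^{(i)}-d,$$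 $$h_k^{(i)}(\{\mathbf{V}_g\})=\sum_{g=1}^G\mathrm{Tr}\big(\mathbf{V}_g^H\hat{\mathbf{A}}_k^{(i)}\mathbf{V}_g\big)+2\,\Re\{\mathrm{Tr}(\hat{\mathbf{B}}_k^{(i)}\mathbf{V}_{g_k})\}+\hat b_k^{(i)}.$$ Here $\log$ is the natural logarithm. *)

theory Defs
  imports "HOL-Analysis.Analysis"
begin

text \<open>Complex matrices are rendered as \<open>complex^'c^'r\<close> (r rows, c columns).
 Index types: 'n has N elements (also d = N), 'm has M elements.\<close>

definition cH :: "complex^'c^'r \<Rightarrow> complex^'r^'c" where
  "cH A = (\<chi> i j. cnj (A $ j $ i))"

definition Jmat :: "complex^'m^'n \<Rightarrow> real \<Rightarrow> 'g::finite \<Rightarrow> ('g \<Rightarrow> complex^'n^'m) \<Rightarrow> complex^'n^'n" where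
  "Jmat Hk s2 gk V = matrix_inv
     ((\<Sum>g\<in>{g. g \<noteq> gk}. Hk ** V g ** cH (V g) ** cH Hk) + s2 *\<^sub>R mat 1)"

definition Uhat :: "complex^'m^'n \<Rightarrow> real \<Rightarrow> 'g::finite \<Rightarrow> ('g \<Rightarrow> complex^'n^'m) \<Rightarrow> complex^'n^'n" where
  "Uhat Hk s2 gk Vi = matrix_inv
     ((\<Sum>g\<in>UNIV. Hk ** Vi g ** cH (Vi g) ** cH Hk) + s2 *\<^sub>R mat 1) ** (Hk ** Vi gk)"

definition Qhat :: "complex^'m^'n \<Rightarrow> real \<Rightarrow> 'g::finite \<Rightarrow> ('g \<Rightarrow> complex^'n^'m) \<Rightarrow> complex^'n^'n" where
  "Qhat Hk s2 gk Vi = mat 1 - cH (Uhat Hk s2 gk Vi) ** Hk ** Vi gk"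

definition Ahat :: "complex^'m^'n \<Rightarrow> real \<Rightarrow> 'g::finite \<Rightarrow> ('g \<Rightarrow> complex^'n^'m) \<Rightarrow> complex^'m^'m" where
  "Ahat Hk s2 gk Vi = cH Hk ** Uhat Hk s2 gk Vi ** matrix_inv (Qhat Hk s2 gk Vi)
      ** cH (Uhat Hk s2 gk Vi) ** Hk"

definition Bhat :: "complex^'m^'n \<Rightarrow> real \<Rightarrow> 'g::finite \<Rightarrow> ('g \<Rightarrow> complex^'n^'m) \<Rightarrow> complex^'m^'n" where
  "Bhat Hk s2 gk Vi = - (matrix_inv (Qhat Hk s2 gk Vi) ** cH (Uhat Hk s2 gk Vi) ** Hk)"

text \<open>The constant term; its trace and determinant are real (Q is Hermitian positive
 definite), so we take real parts.\<close>
definition bhat :: "complex^'m^'n \<Rightarrow> real \<Rightarrow> 'g::finite \<Rightarrow> ('g \<Rightarrow> complex^'n^'m) \<Rightarrow> real" where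
  "bhat Hk s2 gk Vi = Re (trace (matrix_inv (Qhat Hk s2 gk Vi) **
        (mat 1 + s2 *\<^sub>R (cH (Uhat Hk s2 gk Vi) ** Uhat Hk s2 gk Vi))))
     + ln (Re (det (Qhat Hk s2 gk Vi))) - real CARD('n)"

text \<open>The surrogate h_k^(i); Tr(V^H A V) is real (A Hermitian), so Re is harmless.\<close>
definition hsur :: "complex^'m^'n \<Rightarrow> real \<Rightarrow> 'g::finite \<Rightarrow> ('g \<Rightarrow> complex^'n^'m)
    \<Rightarrow> ('g \<Rightarrow> complex^'n^'m) \<Rightarrow> real" where
  "hsur Hk s2 gk Vi V = (\<Sum>g\<in>UNIV. Re (trace (cH (V g) ** Ahat Hk s2 gk Vi ** V g)))
     + 2 * Re (trace (Bhat Hk s2 gk Vi ** V gk)) + bhat Hk s2 gk Vi"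

text \<open>-log det(I + H V_{g_k} V_{g_k}^H H^H J_k); the determinant is real positive.\<close>
definition negrate :: "complex^'m^'n \<Rightarrow> real \<Rightarrow> 'g::finite \<Rightarrow> ('g \<Rightarrow> complex^'n^'m) \<Rightarrow> real" where
  "negrate Hk s2 gk V = - ln (Re (det (mat 1 + Hk ** V gk ** cH (V gk) ** cH Hk ** Jmat Hk s2 gk V)))"

definition perturb :: "('g \<Rightarrow> complex^'n^'m) \<Rightarrow> 'g \<Rightarrow> 'm \<Rightarrow> 'n \<Rightarrow> complex \<Rightarrow> ('g \<Rightarrow> complex^'n^'m)" where
  "perturb V g a b z = V(g := V g + (\<chi> i j. if i = a \<and> j = b then z else 0))"

end

theory Submission
  imports Defs "HOL-Computational_Algebra.Fundamental_Theorem_Algebra"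
begin

text \<open>Let C = \<Sum>g. H V_g V_g^H H^H + \<sigma>^2 I be the received covariance, X = H V_gk, and
  R = C - X X^H the interference-plus-noise covariance, so J = R^-1. The negated rate is
  log det R - log det C = log det (I - X^H C^-1 X) (Sylvester's identity), the log-determinant of
  the MMSE matrix. For any receiver U the MSE matrix E(U) = I - U^H X - X^H U + U^H C U exceeds the
  MMSE matrix by the positive semidefinite (U - C^-1 X)^H C (U - C^-1 X), and the surrogate is
  tr (Q^-1 E(U0)) + log det Q - d, where U0 and Q are the MMSE receiver and MMSE matrix at V^(i).
  Concavity of log det gives h(V) \<ge> log det E(U0), monotonicity of det on the positive definite
  cone gives log det E(U0) \<ge> -rate(V), and both are equalities at V^(i). A differentiable function
  touching a majorant from below has the same derivative there. Finally h is quadratic in V with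
  positive semidefinite Hessian H^H U0 Q^-1 U0^H H.\<close>

lemma cH_nth [simp]: "cH A $ i $ j = cnj (A $ j $ i)"
  by (simp add: cH_def)

lemma cH_cH [simp]: "cH (cH A) = A"
  by (simp add: vec_eq_iff)

lemma cH_mat [simp]: "cH (mat 1) = mat 1"
  by (simp add: vec_eq_iff mat_def)

lemma cH_matrix_mult: "cH (A ** B) = cH B ** cH A"
  by (simp add: vec_eq_iff matrix_matrix_mult_def mult.commute)

lemma cH_add: "cH (A + B) = cH A + cH B"
  by (simp add: vec_eq_iff)

lemma cH_diff: "cH (A - B) = cH A - cH B"
  by (simp add: vec_eq_iff)

lemma cH_scaleR: "cH (r *\<^sub>R A) = r *\<^sub>R cH A"
  by (simp add: vec_eq_iff)

lemma trace_cH: "trace (cH A) = cnj (trace A)"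
  by (simp add: trace_def)

lemma trace_scaleR: "trace (r *\<^sub>R (A::complex^'n^'n)) = r *\<^sub>R trace A"
  by (simp add: trace_def scaleR_sum_right)

lemma trace_uminus: "trace (- (A::complex^'n^'n)) = - trace A"
  by (simp add: trace_def sum_negf)

lemma trace_sum: "finite S \<Longrightarrow> trace (\<Sum>g\<in>S. f g) = (\<Sum>g\<in>S. trace (f g :: complex^'n^'n))"
  by (induction S rule: finite_induct) (auto simp: trace_add trace_0[unfolded mat_0])

lemma matrix_add_rdistrib: "(B + C) ** A = B ** A + C ** (A::'a::semiring_1^_^_)"
  by (vector matrix_matrix_mult_def sum.distrib[symmetric] field_simps)

lemma matrix_diff_ldistrib: "A ** (B - C) = A ** B - A ** (C::'a::ring_1^_^_)"
  by (vector matrix_matrix_mult_def sum_subtractf[symmetric] field_simps)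

lemma matrix_diff_rdistrib: "(B - C) ** A = B ** A - C ** (A::'a::ring_1^_^_)"
  by (vector matrix_matrix_mult_def sum_subtractf[symmetric] field_simps)

lemma matrix_uminus_left: "(- B) ** A = - (B ** (A::'a::ring_1^_^_))"
  by (vector matrix_matrix_mult_def sum_negf[symmetric])

lemma matrix_uminus_right: "A ** (- B) = - (A ** (B::'a::ring_1^_^_))"
  by (vector matrix_matrix_mult_def sum_negf[symmetric])

lemma matrix_sum_left:
  "finite S \<Longrightarrow> (\<Sum>g\<in>S. f g) ** A = (\<Sum>g\<in>S. f g ** (A::'a::semiring_1^_^_))"
  by (induction S rule: finite_induct) (auto simp: matrix_add_rdistrib)

lemma matrix_sum_right:
  "finite S \<Longrightarrow> A ** (\<Sum>g\<in>S. f g) = (\<Sum>g\<in>S. A ** (f g::'a::semiring_1^_^_))"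
  by (induction S rule: finite_induct) (auto simp: matrix_add_ldistrib)

lemma matrix_scaleR_left: "(r *\<^sub>R A) ** B = r *\<^sub>R (A ** (B::complex^_^_))"
  by (simp add: scalar_matrix_assoc)

lemma matrix_scaleR_right: "A ** (r *\<^sub>R B) = r *\<^sub>R (A ** (B::complex^_^_))"
  by (simp add: matrix_scalar_ac scalar_matrix_assoc)

lemma matrix_vector_mult_mat: "mat c *v x = c *s (x::'a::semiring_1^'n)"
  by (simp add: vec_eq_iff matrix_vector_mult_def mat_def if_distrib if_distribR cong: if_cong)

lemma matrix_vector_mult_scaleR_left: "(r *\<^sub>R A) *v x = r *\<^sub>R (A *v (x::complex^'n))"
  by (simp add: vec_eq_iff matrix_vector_mult_def scaleR_sum_right)

lemma matrix_inv_right_left: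
  assumes "invertible (A::'a::semiring_1^'n^'m)"
  shows matrix_inv_right: "A ** matrix_inv A = mat 1"
    and matrix_inv_left: "matrix_inv A ** A = mat 1"
proof -
  have "\<exists>A'. A ** A' = mat 1 \<and> A' ** A = mat 1"
    using assms by (simp add: invertible_def)
  then have "A ** matrix_inv A = mat 1 \<and> matrix_inv A ** A = mat 1"
    unfolding matrix_inv_def by (rule someI_ex)
  then show "A ** matrix_inv A = mat 1" "matrix_inv A ** A = mat 1" by auto
qed

lemma matrix_inv_cancel:
  assumes "invertible (C::'a::semiring_1^'n^'n)"
  shows "A ** C ** matrix_inv C = A" "A ** matrix_inv C ** C = A"
  by (simp_all add: matrix_mul_assoc[symmetric] matrix_inv_right_left[OF assms])

lemma matrix_inv_unique:
  assumes "invertible (A::'a::semiring_1^'n^'n)" "A ** B = mat 1"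
  shows "matrix_inv A = B"
  by (metis assms matrix_inv_cancel(2) matrix_mul_lid matrix_mul_assoc)

lemma matrix_inv_mat_1 [simp]: "matrix_inv (mat 1 :: 'a::semiring_1^'n^'n) = mat 1"
  by (rule matrix_inv_unique) (auto simp: invertible_def)

lemma cH_matrix_inv:
  assumes "invertible (A::complex^'n^'n)"
  shows "cH (matrix_inv A) = matrix_inv (cH A)"
proof -
  have inv: "invertible (cH A)"
    using assms unfolding invertible_def by (metis cH_matrix_mult cH_mat)
  have "cH A ** cH (matrix_inv A) = mat 1"
    by (metis matrix_inv_left[OF assms] cH_matrix_mult cH_mat)
  then show ?thesis using matrix_inv_unique[OF inv] by simp
qed

lemma det_matrix_inv: "invertible (A::'a::comm_ring_1^'n^'n) \<Longrightarrow> det (matrix_inv A) * det A = 1"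
  by (metis det_I det_mul matrix_inv_left)

section \<open>Hermitian and positive definite matrices\<close>

definition cinner :: "complex^'n \<Rightarrow> complex^'n \<Rightarrow> complex" where
  "cinner x y = (\<Sum>i\<in>UNIV. cnj (x$i) * y$i)"

lemma cinner_adjoint: "cinner x (A *v y) = cinner (cH A *v x) y"
proof -
  have "cinner x (A *v y) = (\<Sum>i\<in>UNIV. \<Sum>j\<in>UNIV. cnj (x$i) * A$i$j * y$j)"
    unfolding cinner_def matrix_vector_mult_def by (simp add: sum_distrib_left mult.assoc)
  also have "\<dots> = (\<Sum>j\<in>UNIV. \<Sum>i\<in>UNIV. cnj (x$i) * A$i$j * y$j)"
    by (rule sum.swap)
  also have "\<dots> = cinner (cH A *v x) y"
    unfolding cinner_def matrix_vector_mult_def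
    by (simp add: sum_distrib_left sum_distrib_right mult.commute mult.left_commute)
  finally show ?thesis .
qed

lemma cinner_commute: "cinner y x = cnj (cinner x y)"
  by (simp add: cinner_def mult.commute)

lemma cinner_self: "cinner x x = of_real (\<Sum>i\<in>UNIV. (cmod (x$i))\<^sup>2)"
  unfolding cinner_def of_real_sum
  by (rule sum.cong, simp, subst complex_norm_square, rule mult.commute)

lemma cinner_self_nonneg: "Re (cinner x x) \<ge> 0"
  by (simp add: cinner_self sum_nonneg)

lemma cinner_self_pos: "x \<noteq> 0 \<Longrightarrow> Re (cinner x x) > 0"
proof -
  assume "x \<noteq> 0"
  then obtain i where i: "x$i \<noteq> 0" by (auto simp: vec_eq_iff)
  have "(cmod (x$i))\<^sup>2 \<le> (\<Sum>i\<in>UNIV. (cmod (x$i))\<^sup>2)"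
    by (rule member_le_sum) auto
  moreover have "(cmod (x$i))\<^sup>2 > 0" using i by simp
  moreover have "Re (cinner x x) = (\<Sum>i\<in>UNIV. (cmod (x$i))\<^sup>2)" by (simp add: cinner_self)
  ultimately show ?thesis by linarith
qed

lemma cinner_add_right: "cinner x (y + z) = cinner x y + cinner x z"
  by (simp add: cinner_def distrib_left sum.distrib)

lemma cinner_diff_right: "cinner x (y - z) = cinner x y - cinner x z"
  by (simp add: cinner_def right_diff_distrib sum_subtractf)

lemma cinner_diff_left: "cinner (x - y) z = cinner x z - cinner y z"
  by (simp add: cinner_def left_diff_distrib sum_subtractf)

lemma cinner_scale_right: "cinner x (c *s y) = c * cinner x y"
  by (simp add: cinner_def sum_distrib_left mult_ac)

lemma cinner_scaleR_right: "cinner x (r *\<^sub>R y) = r *\<^sub>R cinner x y"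
  by (simp add: cinner_def scaleR_sum_right)

lemma cinner_zero_left [simp]: "cinner 0 y = 0"
  by (simp add: cinner_def)

definition hermitian :: "complex^'n^'n \<Rightarrow> bool" where
  "hermitian A \<longleftrightarrow> cH A = A"

definition pos_def :: "complex^'n^'n \<Rightarrow> bool" where
  "pos_def A \<longleftrightarrow> hermitian A \<and> (\<forall>x. x \<noteq> 0 \<longrightarrow> Re (cinner x (A *v x)) > 0)"

definition pos_semidef :: "complex^'n^'n \<Rightarrow> bool" where
  "pos_semidef A \<longleftrightarrow> hermitian A \<and> (\<forall>x. Re (cinner x (A *v x)) \<ge> 0)"

lemma hermitian_cinner_real:
  assumes "hermitian A" shows "Im (cinner x (A *v x)) = 0"
proof -
  have "cinner x (A *v x) = cnj (cinner x (A *v x))"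
    using assms cinner_adjoint[of x A x] cinner_commute[of x "A *v x"] by (simp add: hermitian_def)
  from arg_cong[OF this, of Im] show ?thesis by simp
qed

lemma pos_def_imp_pos_semidef: "pos_def A \<Longrightarrow> pos_semidef A"
  unfolding pos_def_def pos_semidef_def
  by (metis cinner_zero_left less_eq_real_def matrix_vector_mult_0_right order_refl zero_complex.sel(1))

lemma pos_semidef_add: "pos_semidef A \<Longrightarrow> pos_semidef B \<Longrightarrow> pos_semidef (A + B)"
  unfolding pos_semidef_def hermitian_def
  by (auto simp: cH_add matrix_vector_mult_add_rdistrib cinner_add_right)

lemma pos_semidef_add_pos_def: "pos_semidef A \<Longrightarrow> pos_def B \<Longrightarrow> pos_def (A + B)"
  unfolding pos_def_def pos_semidef_def hermitian_def
  by (auto simp: cH_add matrix_vector_mult_add_rdistrib cinner_add_right add_nonneg_pos)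

lemma pos_semidef_sum:
  "finite S \<Longrightarrow> (\<And>g. g \<in> S \<Longrightarrow> pos_semidef (f g)) \<Longrightarrow> pos_semidef (\<Sum>g\<in>S. f g)"
proof (induction S rule: finite_induct)
  case empty
  show ?case by (simp add: pos_semidef_def hermitian_def vec_eq_iff cinner_def)
qed (auto intro: pos_semidef_add)

lemma pos_def_scaled_id: "s > 0 \<Longrightarrow> pos_def (s *\<^sub>R mat 1 :: complex^'n^'n)"
  unfolding pos_def_def hermitian_def
  by (auto simp: cH_scaleR matrix_vector_mult_scaleR_left cinner_scaleR_right cinner_self_pos)

lemma pos_semidef_congruence:
  assumes "pos_semidef C" shows "pos_semidef (cH Y ** C ** Y)"
proof -
  have "cinner x ((cH Y ** C ** Y) *v x) = cinner (Y *v x) (C *v (Y *v x))" for x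
    by (simp add: matrix_vector_mul_assoc[symmetric] cinner_adjoint)
  moreover have "cH (cH Y ** C ** Y) = cH Y ** C ** Y"
    using assms by (simp add: pos_semidef_def hermitian_def cH_matrix_mult matrix_mul_assoc)
  ultimately show ?thesis using assms unfolding pos_semidef_def hermitian_def by simp
qed

lemma pos_semidef_gram: "pos_semidef (Y ** cH Y)"
proof -
  have "pos_semidef (mat 1 :: complex^'n^'n)"
    by (simp add: pos_semidef_def hermitian_def cinner_self_nonneg)
  from pos_semidef_congruence[OF this, of "cH Y"] show ?thesis by simp
qed

lemma pos_def_inj:
  assumes "pos_def A" shows "inj ((*v) A)"
proof (rule injI)
  fix x y assume "A *v x = A *v y"
  then have "A *v (x - y) = 0" by (simp add: matrix_vector_mult_diff_distrib)
  then have "\<not> Re (cinner (x - y) (A *v (x - y))) > 0" by (simp add: cinner_def)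
  then show "x = y" using assms unfolding pos_def_def by (metis eq_iff_diff_eq_0)
qed

lemma pos_def_invertible: "pos_def A \<Longrightarrow> invertible A"
  using pos_def_inj det_nz_iff_inj_gen[OF matrix_vector_mul_linear_gen, of A]
  by (simp add: invertible_det_nz)

lemma hermitian_matrix_inv: "hermitian A \<Longrightarrow> invertible A \<Longrightarrow> hermitian (matrix_inv A)"
  by (simp add: hermitian_def cH_matrix_inv)

lemma pos_def_matrix_inv:
  assumes "pos_def A" shows "pos_def (matrix_inv A)"
proof -
  have inv: "invertible A" using pos_def_invertible[OF assms] .
  have hA: "cH A = A" using assms by (simp add: pos_def_def hermitian_def)
  have "Re (cinner x (matrix_inv A *v x)) > 0" if x: "x \<noteq> 0" for x
  proof -
    define y where "y = matrix_inv A *v x"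
    have Ay: "A *v y = x"
      unfolding y_def by (simp add: matrix_vector_mul_assoc matrix_inv_right[OF inv])
    have "cinner x (matrix_inv A *v x) = cinner y (A *v y)"
      using cinner_adjoint[of y A y] hA by (simp add: Ay y_def[symmetric])
    moreover have "y \<noteq> 0" using Ay x by auto
    ultimately show ?thesis using assms by (simp add: pos_def_def)
  qed
  then show ?thesis
    using assms hermitian_matrix_inv[OF _ inv] by (simp add: pos_def_def)
qed

section \<open>Eigenvalue factorisation of the shifted determinant\<close>

definition det_shift_term :: "complex^'n^'n \<Rightarrow> ('n \<Rightarrow> 'n) \<Rightarrow> complex poly" where
  "det_shift_term A p =
     of_int (sign p) * (\<Prod>i\<in>UNIV. if p i = i then [:A$i$i, 1:] else [:A$i$(p i):])"

definition det_shift_poly :: "complex^'n^'n \<Rightarrow> complex poly" where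
  "det_shift_poly A = (\<Sum>p\<in>{p. p permutes (UNIV::'n set)}. det_shift_term A p)"

lemma poly_det_shift_poly: "poly (det_shift_poly A) t = det (A + mat t)"
  unfolding det_shift_poly_def det_shift_term_def det_def
  by (auto simp: poly_sum poly_prod mat_def intro!: sum.cong prod.cong arg_cong2[where f="(*)"])

lemma card_fixpoints_permutation:
  assumes p: "p permutes (UNIV::'n::finite set)" and "p \<noteq> id"
  shows "card {i. p i = i} + 2 \<le> CARD('n)"
proof -
  obtain i where i: "p i \<noteq> i" using \<open>p \<noteq> id\<close> by (auto simp: fun_eq_iff)
  have "p (p i) \<noteq> p i" using i permutes_inj[OF p] by (metis injD)
  then have "{i, p i} \<subseteq> - {i. p i = i}" using i by auto
  moreover have "card {i, p i} = 2" using i by auto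
  ultimately have "2 \<le> card (- {i. p i = i})" by (metis card_mono finite)
  moreover have "card {i. p i = i} + card (- {i. p i = i}) = CARD('n)"
    using card_Un_disjoint[of "{i. p i = i}" "- {i. p i = i}"] by (simp add: Compl_partition)
  ultimately show ?thesis by linarith
qed

lemma degree_det_shift_term: "degree (det_shift_term A p) \<le> card {i. p i = i}"
proof -
  have "degree (\<Prod>i\<in>UNIV. if p i = i then [:A$i$i, 1:] else [:A$i$(p i):])
      \<le> (\<Sum>i\<in>UNIV. degree (if p i = i then [:A$i$i, 1:] else [:A$i$(p i):]))"
    using degree_prod_sum_le[of UNIV "\<lambda>i. if p i = i then [:A$i$i, 1:] else [:A$i$(p i):]"]
    by (simp add: o_def)
  also have "\<dots> = (\<Sum>i\<in>UNIV. if p i = i then 1 else 0)"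
    by (rule sum.cong) auto
  also have "\<dots> = card {i. p i = i}"
    by (simp add: sum.If_cases)
  finally show ?thesis unfolding det_shift_term_def
    by (metis (no_types, lifting) degree_mult_le degree_of_int add_0 order_trans)
qed

lemma degree_det_shift_term_nonid:
  fixes A :: "complex^'n^'n"
  assumes "p permutes UNIV" and "p \<noteq> id"
  shows "degree (det_shift_term A p) + 2 \<le> CARD('n)"
  using card_fixpoints_permutation[OF assms] degree_det_shift_term[of A p] by linarith

lemma coeffs_prod_list_linear:
  fixes as :: "complex list"
  defines "P \<equiv> (\<Prod>a\<leftarrow>as. [:a,1:])"
  shows "degree P = length as \<and> coeff P (length as) = 1 \<and>
     (as \<noteq> [] \<longrightarrow> coeff P (length as - 1) = sum_list as)"
  unfolding P_def
proof (induction as)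
  case (Cons a as)
  define Q where "Q = (\<Prod>a\<leftarrow>as. [:a,1:])"
  have IH: "degree Q = length as" "coeff Q (length as) = 1"
    "as \<noteq> [] \<Longrightarrow> coeff Q (length as - 1) = sum_list as"
    using Cons by (auto simp: Q_def)
  have Q: "Q \<noteq> 0" using IH(2) by auto
  have eq: "(\<Prod>a\<leftarrow>a # as. [:a,1:]) = smult a Q + pCons 0 Q"
    by (simp add: Q_def)
  have "degree (smult a Q) < degree (pCons 0 Q)"
    using degree_smult_le[of a Q] Q by simp
  then have "degree (smult a Q + pCons 0 Q) = Suc (length as)"
    using Q IH(1) by (simp add: degree_add_eq_right)
  moreover have "coeff (smult a Q + pCons 0 Q) (length as) = a + sum_list as"
    using IH by (cases as) (simp_all add: Q_def)
  ultimately show ?case using eq IH by (simp add: coeff_eq_0)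
qed simp

lemma monic_poly_splits:
  fixes p :: "complex poly"
  assumes "lead_coeff p = 1"
  shows "\<exists>rs. length rs = degree p \<and> p = (\<Prod>r\<leftarrow>rs. [:-r,1:])"
  using assms
proof (induction "degree p" arbitrary: p)
  case 0
  then have "p = [:1:]" using degree_0_id[of p] by (metis one_pCons)
  then show ?case using 0 by (intro exI[of _ "[]"]) simp
next
  case (Suc n)
  then have "\<not> constant (poly p)" by (simp add: constant_degree)
  then obtain r where "poly p r = 0" using fundamental_theorem_of_algebra by blast
  then obtain q where q: "p = [:-r,1:] * q" using poly_eq_0_iff_dvd by (metis dvdE)
  then have "q \<noteq> 0" using Suc(3) by auto
  then have "degree p = degree [:-r,1:] + degree q"
    unfolding q by (intro degree_mult_eq) simp_all
  then have dq: "degree p = Suc (degree q)" by simp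
  have "lead_coeff p = lead_coeff [:-r,1:] * lead_coeff q"
    unfolding q by (rule lead_coeff_mult)
  then have "lead_coeff q = 1" using Suc(3) by simp
  then obtain rs where "length rs = degree q" "q = (\<Prod>r\<leftarrow>rs. [:-r,1:])"
    using Suc(1)[of q] dq Suc(2) by auto
  then show ?case using q dq by (intro exI[of _ "r # rs"]) simp
qed

text \<open>The identity permutation contributes \<open>\<Prod>i. [:A$i$i, 1:]\<close>; every other permutation
  fixes at most \<open>n - 2\<close> points and so only affects coefficients below \<open>n - 1\<close>.\<close>

lemma det_shift_poly_coeffs:
  fixes A :: "complex^'n^'n"
  shows "degree (det_shift_poly A) = CARD('n) \<and> lead_coeff (det_shift_poly A) = 1
    \<and> coeff (det_shift_poly A) (CARD('n) - 1) = trace A"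
proof -
  define n where "n = CARD('n)"
  define T where "T = det_shift_term A"
  define S where "S = {p. p permutes (UNIV::'n set)}"
  have "finite S" "id \<in> S" unfolding S_def by (simp_all add: finite_permutations permutes_id)
  then have cp: "det_shift_poly A = T id + (\<Sum>p\<in>S - {id}. T p)"
    unfolding det_shift_poly_def T_def S_def by (simp add: sum.remove)
  obtain xs where xs: "set xs = (UNIV::'n set)" "distinct xs"
    using finite_distinct_list[of "UNIV::'n set"] by auto
  define as where "as = map (\<lambda>i. A$i$i) xs"
  have las: "length as = n" unfolding as_def n_def using distinct_card[OF xs(2)] xs(1) by simp
  have "T id = (\<Prod>a\<leftarrow>as. [:a,1:])"
    unfolding T_def det_shift_term_def as_def using prod.distinct_set_conv_list[OF xs(2)]
    by (simp add: xs(1) o_def)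
  moreover have "trace A = sum_list as"
    unfolding trace_def as_def using sum.distinct_set_conv_list[OF xs(2)] by (simp add: xs(1))
  moreover have "as \<noteq> []" using las by (auto simp: n_def)
  ultimately have L: "degree (T id) = n" "coeff (T id) n = 1" "coeff (T id) (n - 1) = trace A"
    using coeffs_prod_list_linear[of as] las by auto
  have R: "coeff (\<Sum>p\<in>S - {id}. T p) k = 0" if "n \<le> k + 1" for k
  proof -
    have "degree (T p) < k" if "p \<in> S - {id}" for p
      using degree_det_shift_term_nonid[of p A] that \<open>n \<le> k + 1\<close>
      unfolding S_def T_def n_def by auto
    then show ?thesis by (simp add: coeff_sum coeff_eq_0)
  qed
  have c: "coeff (det_shift_poly A) n = 1" using L R[of n] by (simp add: cp)
  have "degree (det_shift_poly A) \<le> n"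
    using L R by (intro degree_le) (simp add: cp coeff_eq_0)
  moreover have "n \<le> degree (det_shift_poly A)" using c by (simp add: le_degree)
  ultimately have "degree (det_shift_poly A) = n" by (rule antisym)
  then show ?thesis using c L R[of "n - 1"] unfolding n_def[symmetric] by (simp add: cp)
qed

lemma det_shift_eigenvalues:
  fixes A :: "complex^'n^'n"
  obtains as where "length as = CARD('n)"
    "\<And>t. det (A + mat t) = (\<Prod>a\<leftarrow>as. a + t)"
    "trace A = sum_list as"
    "\<And>a. a \<in> set as \<Longrightarrow> \<exists>x. x \<noteq> 0 \<and> A *v x = a *s x"
proof -
  note cp = det_shift_poly_coeffs[of A]
  obtain rs where rs: "length rs = CARD('n)" "det_shift_poly A = (\<Prod>r\<leftarrow>rs. [:-r,1:])"
    using monic_poly_splits[of "det_shift_poly A"] cp by auto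
  define as where "as = map uminus rs"
  have cpa: "det_shift_poly A = (\<Prod>a\<leftarrow>as. [:a,1:])"
    unfolding as_def rs(2) by (simp add: o_def)
  have las: "length as = CARD('n)" using rs(1) by (simp add: as_def)
  have "poly (\<Prod>a\<leftarrow>as. [:a,1:]) t = (\<Prod>a\<leftarrow>as. a + t)" for t
    by (induction as) (simp_all add: distrib_right)
  then have det: "det (A + mat t) = (\<Prod>a\<leftarrow>as. a + t)" for t
    by (simp add: poly_det_shift_poly[symmetric] cpa)
  have "trace A = sum_list as"
    using coeffs_prod_list_linear[of as] cpa cp las by auto
  moreover have "\<exists>x. x \<noteq> 0 \<and> A *v x = a *s x" if "a \<in> set as" for a
  proof -
    have "det (A + mat (-a)) = 0" using that by (auto simp: det prod_list_zero_iff)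
    then have "\<not> inj ((*v) (A + mat (-a)))"
      using det_nz_iff_inj_gen[OF matrix_vector_mul_linear_gen, of "A + mat (-a)"] by simp
    then obtain x y where "(A + mat (-a)) *v x = (A + mat (-a)) *v y" "x \<noteq> y"
      unfolding inj_def by blast
    then have "A *v (x - y) = a *s (x - y)" "x - y \<noteq> 0"
      by (auto simp: vec_eq_iff algebra_simps matrix_vector_mult_mat)
    then show ?thesis by blast
  qed
  ultimately show ?thesis using that las det by blast
qed

lemma generalized_eigenvalues_real:
  fixes Q E :: "complex^'n^'n"
  assumes Q: "pos_def Q" and E: "hermitian E"
  obtains rs where "length rs = CARD('n)"
    "\<And>t. det (matrix_inv Q ** E + mat (of_real t)) = of_real (\<Prod>r\<leftarrow>rs. r + t)"
    "trace (matrix_inv Q ** E) = of_real (sum_list rs)"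
    "\<And>r. r \<in> set rs \<Longrightarrow> \<exists>x. x \<noteq> 0 \<and> r * Re (cinner x (Q *v x)) = Re (cinner x (E *v x))"
proof -
  define M where "M = matrix_inv Q ** E"
  obtain as where as: "length as = CARD('n)" "\<And>t. det (M + mat t) = (\<Prod>a\<leftarrow>as. a + t)"
    "trace M = sum_list as" "\<And>a. a \<in> set as \<Longrightarrow> \<exists>x. x \<noteq> 0 \<and> M *v x = a *s x"
    using det_shift_eigenvalues[of M] by blast
  have eig: "Im a = 0 \<and> (\<exists>x. x \<noteq> 0 \<and> Re a * Re (cinner x (Q *v x)) = Re (cinner x (E *v x)))"
    if a: "a \<in> set as" for a
  proof -
    obtain x where x: "x \<noteq> 0" "M *v x = a *s x" using as(4)[OF a] by blast
    have "E *v x = Q *v (M *v x)"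
      using pos_def_invertible[OF Q]
      by (simp add: M_def matrix_vector_mul_assoc matrix_mul_assoc matrix_inv_right)
    then have eq: "cinner x (E *v x) = a * cinner x (Q *v x)"
      using x(2) by (simp add: vector_scalar_commute cinner_scale_right)
    have "Im (cinner x (E *v x)) = 0" "Im (cinner x (Q *v x)) = 0" "Re (cinner x (Q *v x)) > 0"
      using E Q x(1) by (simp_all add: hermitian_cinner_real pos_def_def)
    with arg_cong[OF eq, of Im] arg_cong[OF eq, of Re] x(1) show ?thesis by auto
  qed
  define rs where "rs = map Re as"
  have "map (\<lambda>r. complex_of_real r) rs = as"
    unfolding rs_def map_map by (rule map_idI) (simp add: complex_eq_iff eig)
  then have "(\<Prod>a\<leftarrow>as. a + of_real t) = of_real (\<Prod>r\<leftarrow>rs. r + t)"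
    and "sum_list as = of_real (sum_list rs)" for t
    by (induction rs arbitrary: as) auto
  moreover have "length rs = CARD('n)" using as(1) by (simp add: rs_def)
  moreover have "\<exists>x. x \<noteq> 0 \<and> r * Re (cinner x (Q *v x)) = Re (cinner x (E *v x))"
    if r: "r \<in> set rs" for r
    using r eig by (auto simp: rs_def)
  ultimately show ?thesis using that as(2,3) by (simp add: M_def)
qed

lemma pos_def_det:
  assumes "pos_def A" shows "Re (det A) > 0" "Im (det A) = 0"
proof -
  have I: "pos_def (mat 1 :: complex^'n^'n)"
    by (simp add: pos_def_def hermitian_def cinner_self_pos)
  have "hermitian A" using assms by (simp add: pos_def_def)
  note eig = generalized_eigenvalues_real[OF I this, unfolded matrix_inv_mat_1 matrix_mul_lid
      matrix_vector_mul_lid]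
  obtain rs where rs: "\<And>t. det (A + mat (of_real t)) = of_real (\<Prod>r\<leftarrow>rs. r + t)"
    "\<And>r. r \<in> set rs \<Longrightarrow> \<exists>x. x \<noteq> 0 \<and> r * Re (cinner x x) = Re (cinner x (A *v x))"
    by (rule eig) blast
  have "r > 0" if r: "r \<in> set rs" for r
  proof -
    obtain x where x: "x \<noteq> 0" "r * Re (cinner x x) = Re (cinner x (A *v x))"
      using rs(2)[OF r] by blast
    then have "0 < r * Re (cinner x x)" using assms by (simp add: pos_def_def)
    with cinner_self_pos[OF x(1)] show ?thesis by (simp add: zero_less_mult_iff)
  qed
  then have "prod_list rs > 0" by (induction rs) auto
  with rs(1)[of 0] show "Re (det A) > 0" "Im (det A) = 0" by simp_all
qed

lemma ln_prod_list_le: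
  assumes "\<forall>r\<in>set rs. r > (0::real)"
  shows "0 < prod_list rs \<and> ln (prod_list rs) \<le> sum_list rs - length rs"
  using assms
proof (induction rs)
  case (Cons r rs)
  then have "r > 0" "0 < prod_list rs" "ln (prod_list rs) \<le> sum_list rs - length rs" by auto
  moreover have "ln r \<le> r - 1" using \<open>r > 0\<close> by (rule ln_le_minus_one)
  ultimately show ?case by (simp add: ln_mult)
qed simp

text \<open>Concavity of \<open>log det\<close>: the eigenvalues \<open>r\<close> of \<open>Q\<^sup>-\<^sup>1 E\<close> satisfy \<open>ln r \<le> r - 1\<close>.\<close>

lemma ln_det_le_trace:
  fixes Q E :: "complex^'n^'n"
  assumes Q: "pos_def Q" and E: "pos_def E"
  shows "ln (Re (det E)) \<le> Re (trace (matrix_inv Q ** E)) + ln (Re (det Q)) - real CARD('n)"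
proof -
  have "hermitian E" using E by (simp add: pos_def_def)
  then obtain rs where rs: "length rs = CARD('n)"
    "\<And>t. det (matrix_inv Q ** E + mat (of_real t)) = of_real (\<Prod>r\<leftarrow>rs. r + t)"
    "trace (matrix_inv Q ** E) = of_real (sum_list rs)"
    "\<And>r. r \<in> set rs \<Longrightarrow> \<exists>x. x \<noteq> 0 \<and> r * Re (cinner x (Q *v x)) = Re (cinner x (E *v x))"
    by (metis generalized_eigenvalues_real[OF Q])
  have "r > 0" if r: "r \<in> set rs" for r
  proof -
    obtain x where x: "x \<noteq> 0" "r * Re (cinner x (Q *v x)) = Re (cinner x (E *v x))"
      using rs(4)[OF r] by blast
    then have "0 < r * Re (cinner x (Q *v x))" "0 < Re (cinner x (Q *v x))"
      using Q E by (simp_all add: pos_def_def)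
    then show ?thesis by (simp add: zero_less_mult_iff)
  qed
  then have "\<forall>r\<in>set rs. r > 0" by blast
  note prod = ln_prod_list_le[OF this]
  have "det (matrix_inv Q ** E) * det Q = (det (matrix_inv Q) * det Q) * det E"
    by (simp add: det_mul mult_ac)
  also have "\<dots> = det E"
    using det_matrix_inv[OF pos_def_invertible[OF Q]] by simp
  finally have "det (matrix_inv Q ** E) * det Q = det E" .
  moreover have "det (matrix_inv Q ** E) = of_real (prod_list rs)"
    using rs(2)[of 0] by simp
  ultimately have "of_real (prod_list rs) * det Q = det E" by simp
  from arg_cong[OF this, of Re] have "prod_list rs * Re (det Q) = Re (det E)" by simp
  then have "ln (Re (det E)) = ln (prod_list rs) + ln (Re (det Q))"
    using ln_mult[of "prod_list rs" "Re (det Q)"] prod pos_def_det(1)[OF Q] by simp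
  with prod rs(1,3) show ?thesis by simp
qed

lemma det_le_det_add_pos_semidef:
  fixes E P :: "complex^'n^'n"
  assumes E: "pos_def E" and P: "pos_semidef P"
  shows "Re (det E) \<le> Re (det (E + P))"
proof -
  have "hermitian P" using P by (simp add: pos_semidef_def)
  then obtain rs where rs: "\<And>t. det (matrix_inv E ** P + mat (of_real t)) = of_real (\<Prod>r\<leftarrow>rs. r + t)"
    "\<And>r. r \<in> set rs \<Longrightarrow> \<exists>x. x \<noteq> 0 \<and> r * Re (cinner x (E *v x)) = Re (cinner x (P *v x))"
    by (metis generalized_eigenvalues_real[OF E])
  have "r \<ge> 0" if r: "r \<in> set rs" for r
  proof -
    obtain x where x: "x \<noteq> 0" "r * Re (cinner x (E *v x)) = Re (cinner x (P *v x))"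
      using rs(2)[OF r] by blast
    then have "0 \<le> r * Re (cinner x (E *v x))" "0 < Re (cinner x (E *v x))"
      using E P by (simp_all add: pos_def_def pos_semidef_def)
    then show ?thesis by (simp add: zero_le_mult_iff)
  qed
  then have ge1: "(\<Prod>r\<leftarrow>rs. r + 1) \<ge> 1"
  proof (induction rs)
    case (Cons r rs)
    then have "1 \<le> r + 1" "1 \<le> (\<Prod>r\<leftarrow>rs. r + 1)" by auto
    then show ?case using mult_mono[of 1 "r + 1" 1 "\<Prod>r\<leftarrow>rs. r + 1"] by simp
  qed simp
  have "E + P = E ** (matrix_inv E ** P + mat 1)"
    using pos_def_invertible[OF E]
    by (simp add: matrix_add_ldistrib matrix_mul_assoc matrix_inv_right)
  then have "det (E + P) = det E * of_real (\<Prod>r\<leftarrow>rs. r + 1)"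
    using rs(1)[of 1] by (simp add: det_mul)
  then have "Re (det (E + P)) = Re (det E) * (\<Prod>r\<leftarrow>rs. r + 1)"
    by simp
  with ge1 pos_def_det(1)[OF E] show ?thesis by simp
qed

section \<open>Differentiability of determinants along curves\<close>

definition entrywise_differentiable :: "(real \<Rightarrow> complex^'c^'r) \<Rightarrow> real \<Rightarrow> bool" where
  "entrywise_differentiable F t0 \<longleftrightarrow> (\<forall>i j. (\<lambda>t. F t $ i $ j) differentiable (at t0))"

lemma entrywise_differentiable_const: "entrywise_differentiable (\<lambda>t. A) t0"
  by (simp add: entrywise_differentiable_def)

lemma entrywise_differentiable_add:
  "entrywise_differentiable F t0 \<Longrightarrow> entrywise_differentiable G t0
    \<Longrightarrow> entrywise_differentiable (\<lambda>t. F t + G t) t0"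
  by (simp add: entrywise_differentiable_def)

lemma entrywise_differentiable_sum:
  "finite S \<Longrightarrow> (\<And>g. g \<in> S \<Longrightarrow> entrywise_differentiable (F g) t0)
    \<Longrightarrow> entrywise_differentiable (\<lambda>t. \<Sum>g\<in>S. F g t) t0"
  by (auto simp: entrywise_differentiable_def sum_component)

lemma entrywise_differentiable_mult:
  "entrywise_differentiable F t0 \<Longrightarrow> entrywise_differentiable G t0
    \<Longrightarrow> entrywise_differentiable (\<lambda>t. F t ** G t) t0"
  unfolding entrywise_differentiable_def matrix_matrix_mult_def by auto

lemma entrywise_differentiable_cH:
  "entrywise_differentiable F t0 \<Longrightarrow> entrywise_differentiable (\<lambda>t. cH (F t)) t0"
  by (simp add: entrywise_differentiable_def differentiable_cnj_iff)

lemma entrywise_differentiable_line: "entrywise_differentiable (\<lambda>t. A + t *\<^sub>R B) t0"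
proof -
  have "(A + t *\<^sub>R B) $ i $ j = A$i$j + t *\<^sub>R (B$i$j)" for t i j by simp
  then have "(\<lambda>t. (A + t *\<^sub>R B) $ i $ j) = (\<lambda>t. A$i$j + of_real t * B$i$j)" for i j
    by (simp only: scaleR_conv_of_real)
  moreover have "(\<lambda>t. A$i$j + of_real t * B$i$j) differentiable (at t0)" for i j
    by (intro differentiable_add differentiable_mult differentiable_const) simp
  ultimately show ?thesis by (simp add: entrywise_differentiable_def)
qed

lemma entrywise_differentiable_mat:
  "entrywise_differentiable (\<lambda>t. mat (of_real t) :: complex^'n^'n) t0"
proof -
  have "(\<lambda>t. if i = j then complex_of_real t else 0) differentiable (at t0)" for i j :: 'n
    by (cases "i = j") simp_all
  then show ?thesis by (simp add: entrywise_differentiable_def mat_def)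
qed

lemma differentiable_prod:
  fixes f :: "'i \<Rightarrow> real \<Rightarrow> complex"
  shows "finite S \<Longrightarrow> (\<And>i. i \<in> S \<Longrightarrow> f i differentiable (at t0))
    \<Longrightarrow> (\<lambda>t. \<Prod>i\<in>S. f i t) differentiable (at t0)"
  by (induction S rule: finite_induct) auto

lemma differentiable_det:
  assumes "entrywise_differentiable F t0" shows "(\<lambda>t. det (F t)) differentiable (at t0)"
  using assms unfolding det_def entrywise_differentiable_def
  by (auto intro!: differentiable_sum differentiable_mult differentiable_prod)

lemma differentiable_ln_det:
  assumes F: "entrywise_differentiable F t0" and P: "pos_def (F t0)"
  shows "(\<lambda>t. ln (Re (det (F t)))) differentiable (at t0)"
proof -
  have "(\<lambda>t. Re (det (F t))) differentiable (at t0)"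
    using differentiable_compose[OF bounded_linear_imp_differentiable[OF bounded_linear_Re]
        differentiable_det[OF F]] by (simp add: o_def)
  moreover have "ln differentiable (at (Re (det (F t0))))"
    using DERIV_ln[OF pos_def_det(1)[OF P]] real_differentiable_def by blast
  ultimately show ?thesis
    using differentiable_compose[of ln "\<lambda>t. Re (det (F t))" t0 UNIV] by simp
qed

section \<open>Sylvester's determinant identity\<close>

lemma finite_det_shift_zeros:
  fixes A :: "complex^'n^'n"
  shows "finite {t::real. det (A + mat (of_real t)) = 0}"
proof -
  obtain as where as: "\<And>t. det (A + mat t) = (\<Prod>a\<leftarrow>as. a + t)"
    using det_shift_eigenvalues[of A] by blast
  have "{t::real. det (A + mat (of_real t)) = 0} \<subseteq> (\<lambda>a. - Re a) ` set as"
  proof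
    fix t assume "t \<in> {t::real. det (A + mat (of_real t)) = 0}"
    then obtain a where "a \<in> set as" "a + of_real t = 0"
      by (auto simp: as prod_list_zero_iff)
    then show "t \<in> (\<lambda>a. - Re a) ` set as"
      by (intro image_eqI[of _ _ a]) (auto simp: complex_eq_iff)
  qed
  then show ?thesis by (rule finite_subset) simp
qed

lemma det_one_plus_mult_commute_invertible:
  fixes A B :: "complex^'n^'n"
  assumes "invertible A"
  shows "det (mat 1 + A ** B) = det (mat 1 + B ** A)"
proof -
  have "A ** (mat 1 + B ** A) ** matrix_inv A = mat 1 + A ** B"
    using assms by (simp add: matrix_add_ldistrib matrix_add_rdistrib matrix_mul_assoc
        matrix_inv_right matrix_inv_cancel)
  then have "det (mat 1 + A ** B) = det A * det (mat 1 + B ** A) * det (matrix_inv A)"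
    by (metis det_mul)
  then show ?thesis using det_matrix_inv[OF assms] by (simp add: mult_ac)
qed

text \<open>Both sides are continuous in \<open>A\<close>, and \<open>A + t I\<close> is invertible for all but finitely
  many real \<open>t\<close>.\<close>

lemma det_one_plus_mult_commute:
  fixes A B :: "complex^'n^'n"
  shows "det (mat 1 + A ** B) = det (mat 1 + B ** A)"
proof -
  define f where "f t = det (mat 1 + (A + mat (of_real t)) ** B)
    - det (mat 1 + B ** (A + mat (of_real t)))" for t :: real
  define Z where "Z = {t::real. det (A + mat (of_real t)) = 0}"
  have "f differentiable (at 0)"
    unfolding f_def
    by (intro differentiable_diff differentiable_det entrywise_differentiable_add
        entrywise_differentiable_mult entrywise_differentiable_const entrywise_differentiable_mat)
  then have lim: "(f \<longlongrightarrow> f 0) (at 0)"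
    using differentiable_imp_continuous_within isCont_def by blast
  have "eventually (\<lambda>t. t \<notin> Z) (at 0)"
    using islimpt_finite[OF finite_det_shift_zeros[of A, folded Z_def]] islimpt_iff_eventually
    by blast
  then have "eventually (\<lambda>t. f t = 0) (at 0)"
  proof eventually_elim
    case (elim t)
    then have "invertible (A + mat (of_real t))" by (simp add: Z_def invertible_det_nz)
    then show ?case by (simp add: f_def det_one_plus_mult_commute_invertible)
  qed
  with lim have "((\<lambda>t. 0) \<longlongrightarrow> f 0) (at (0::real))"
    by (rule Lim_transform_eventually)
  then have "f 0 = 0" using LIM_const_eq by metis
  then show ?thesis by (simp add: f_def)
qed

section \<open>The MSE matrix of a linear receiver\<close>

definition covar :: "complex^'m^'n \<Rightarrow> real \<Rightarrow> ('g::finite \<Rightarrow> complex^'n^'m) \<Rightarrow> complex^'n^'n" where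
  "covar H s V = (\<Sum>g\<in>UNIV. H ** V g ** cH (V g) ** cH H) + s *\<^sub>R mat 1"

definition interf_covar ::
    "complex^'m^'n \<Rightarrow> real \<Rightarrow> 'g::finite \<Rightarrow> ('g \<Rightarrow> complex^'n^'m) \<Rightarrow> complex^'n^'n" where
  "interf_covar H s gk V = (\<Sum>g\<in>{g. g \<noteq> gk}. H ** V g ** cH (V g) ** cH H) + s *\<^sub>R mat 1"

text \<open>\<open>mse_matrix H s gk U V\<close> is E[(x - U^H y)(x - U^H y)^H] for the stream x of cluster gk
  received as y = \<Sum>g. H V_g x_g + noise, with white unit-power streams and noise power s.\<close>

definition mse_matrix ::
    "complex^'m^'n \<Rightarrow> real \<Rightarrow> 'g::finite \<Rightarrow> complex^'n^'n \<Rightarrow> ('g \<Rightarrow> complex^'n^'m) \<Rightarrow> complex^'n^'n" where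
  "mse_matrix H s gk U V = mat 1 - cH U ** (H ** V gk) - cH (H ** V gk) ** U + cH U ** covar H s V ** U"

definition mmse_matrix ::
    "complex^'m^'n \<Rightarrow> real \<Rightarrow> 'g::finite \<Rightarrow> ('g \<Rightarrow> complex^'n^'m) \<Rightarrow> complex^'n^'n" where
  "mmse_matrix H s gk V = mat 1 - cH (H ** V gk) ** matrix_inv (covar H s V) ** (H ** V gk)"

lemma cH_sandwich: "H ** V ** cH V ** cH H = (H ** V) ** cH (H ** V)"
  by (simp add: cH_matrix_mult matrix_mul_assoc)

lemma covar_eq_interf_covar:
  "covar H s V = interf_covar H s gk V + (H ** V gk) ** cH (H ** V gk)"
proof -
  have "(\<Sum>g\<in>UNIV. H ** V g ** cH (V g) ** cH H)
      = H ** V gk ** cH (V gk) ** cH H + (\<Sum>g\<in>UNIV - {gk}. H ** V g ** cH (V g) ** cH H)"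
    by (rule sum.remove) auto
  moreover have "UNIV - {gk} = {g. g \<noteq> gk}" by auto
  ultimately show ?thesis
    unfolding covar_def interf_covar_def cH_sandwich by (simp add: algebra_simps)
qed

lemma pos_def_interf_covar: "s > 0 \<Longrightarrow> pos_def (interf_covar H s gk V)"
  unfolding interf_covar_def
  by (intro pos_semidef_add_pos_def pos_semidef_sum pos_def_scaled_id)
    (auto simp: cH_sandwich pos_semidef_gram)

lemma pos_def_covar: "s > 0 \<Longrightarrow> pos_def (covar H s V)"
  unfolding covar_def
  by (intro pos_semidef_add_pos_def pos_semidef_sum pos_def_scaled_id)
    (auto simp: cH_sandwich pos_semidef_gram)

lemma complete_square:
  fixes C U X :: "complex^'n^'n"
  assumes "hermitian C" and inv: "invertible C"
  shows "mat 1 - cH U ** X - cH X ** U + cH U ** C ** U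
    = (mat 1 - cH X ** matrix_inv C ** X)
      + cH (U - matrix_inv C ** X) ** C ** (U - matrix_inv C ** X)"
proof -
  have "cH (U - matrix_inv C ** X) = cH U - cH X ** matrix_inv C"
    using hermitian_matrix_inv[OF assms]
    by (simp add: hermitian_def cH_diff cH_matrix_mult)
  then have "cH (U - matrix_inv C ** X) ** C ** (U - matrix_inv C ** X)
      = cH U ** C ** U - cH U ** X - cH X ** U + cH X ** matrix_inv C ** X"
    by (simp add: matrix_diff_ldistrib matrix_diff_rdistrib matrix_mul_assoc matrix_inv_cancel[OF inv]
        matrix_inv_right[OF inv])
  then show ?thesis by (simp add: algebra_simps)
qed

lemma mse_matrix_eq_mmse_matrix_plus:
  assumes "s > 0"
  shows "mse_matrix H s gk U V = mmse_matrix H s gk V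
    + cH (U - matrix_inv (covar H s V) ** (H ** V gk)) ** covar H s V
        ** (U - matrix_inv (covar H s V) ** (H ** V gk))"
  using pos_def_covar[OF assms] pos_def_invertible[OF pos_def_covar[OF assms]]
  unfolding mse_matrix_def mmse_matrix_def by (intro complete_square) (auto simp: pos_def_def)

lemma cinner_one_minus_gram_inv:
  fixes R X :: "complex^'n^'n"
  assumes hR: "hermitian R" and inv: "invertible (R + X ** cH X)"
    and y: "y = matrix_inv (R + X ** cH X) *v (X *v x)" and w: "w = cH X *v y"
  shows "cinner x ((mat 1 - cH X ** matrix_inv (R + X ** cH X) ** X) *v x) = cinner x x - cinner x w"
    and "cinner x w = of_real (Re (cinner y (R *v y)) + Re (cinner w w))"
proof -
  define C where "C = R + X ** cH X"
  have cC: "cH C = C" using hR by (simp add: C_def hermitian_def cH_add cH_matrix_mult)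
  have Cy: "C *v y = X *v x"
    using inv by (simp add: y C_def matrix_vector_mul_assoc matrix_mul_assoc matrix_inv_right)
  show "cinner x ((mat 1 - cH X ** matrix_inv (R + X ** cH X) ** X) *v x) = cinner x x - cinner x w"
    by (simp add: y w matrix_vector_mult_diff_rdistrib cinner_diff_right matrix_vector_mul_assoc
        matrix_mul_assoc)
  have "cinner x w = cinner y (C *v y)"
    using cinner_adjoint[of x "cH X" y] cinner_adjoint[of y C y] cC Cy by (simp add: w)
  also have "\<dots> = cinner y (R *v y) + cinner w w"
    unfolding C_def w
    by (simp add: matrix_vector_mult_add_rdistrib cinner_add_right
        matrix_vector_mul_assoc[symmetric] cinner_adjoint)
  finally show "cinner x w = of_real (Re (cinner y (R *v y)) + Re (cinner w w))"
    using hermitian_cinner_real[OF hR, of y] by (simp add: complex_eq_iff cinner_self)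
qed

text \<open>A Schur complement. With y and w as above, |x - w|^2 \<ge> 0 gives
  |x|^2 \<ge> 2 Re (x^H w) - |w|^2 = 2 y^H R y + |w|^2.\<close>

lemma pos_def_one_minus_gram_inv:
  fixes R X :: "complex^'n^'n"
  assumes R: "pos_def R"
  shows "pos_def (mat 1 - cH X ** matrix_inv (R + X ** cH X) ** X)"
proof -
  define C where "C = R + X ** cH X"
  have C: "pos_def C" unfolding C_def using pos_semidef_add_pos_def[OF pos_semidef_gram R]
    by (simp add: add.commute)
  have inv: "invertible C" using pos_def_invertible[OF C] .
  have hR: "hermitian R" using R by (simp add: pos_def_def)
  have "Re (cinner x ((mat 1 - cH X ** matrix_inv C ** X) *v x)) > 0" if x: "x \<noteq> 0" for x
  proof -
    define y where "y = matrix_inv C *v (X *v x)"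
    define w where "w = cH X *v y"
    note form = cinner_one_minus_gram_inv[OF hR inv[unfolded C_def] y_def[unfolded C_def] w_def]
    have wx: "cinner w x = cinner x w" using form(2) cinner_commute[of w x] by simp
    have "0 \<le> Re (cinner (x - w) (x - w))" by (rule cinner_self_nonneg)
    also have "cinner (x - w) (x - w) = cinner x x - cinner x w - cinner w x + cinner w w"
      by (simp add: cinner_diff_left cinner_diff_right)
    finally have "2 * Re (cinner y (R *v y)) + Re (cinner w w) \<le> Re (cinner x x)"
      using form(2) wx by simp
    moreover have "Re (cinner y (R *v y)) > 0 \<or> y = 0" using R by (auto simp: pos_def_def)
    ultimately show ?thesis
      using form cinner_self_pos[OF x] by (auto simp: C_def w_def)
  qed
  moreover have "hermitian (mat 1 - cH X ** matrix_inv C ** X)"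
    using hermitian_matrix_inv[OF _ inv] C
    by (simp add: pos_def_def hermitian_def cH_diff cH_matrix_mult matrix_mul_assoc)
  ultimately show ?thesis by (simp add: pos_def_def C_def)
qed

lemma pos_def_mmse_matrix: "s > 0 \<Longrightarrow> pos_def (mmse_matrix H s gk V)"
  unfolding mmse_matrix_def covar_eq_interf_covar[of H s V gk]
  by (rule pos_def_one_minus_gram_inv[OF pos_def_interf_covar])

section \<open>The surrogate majorises the negated rate\<close>

lemma ln_Re_det_mult_matrix_inv:
  assumes A: "pos_def A" and B: "pos_def B"
  shows "ln (Re (det A * det (matrix_inv B))) = ln (Re (det A)) - ln (Re (det B))"
proof -
  have "det (matrix_inv B) = inverse (det B)"
    using det_matrix_inv[OF pos_def_invertible[OF B]] by (metis inverse_unique mult.commute)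
  moreover have "det A = of_real (Re (det A))" "det B = of_real (Re (det B))"
    using pos_def_det(2)[OF A] pos_def_det(2)[OF B] by (simp_all add: complex_eq_iff)
  ultimately have "Re (det A * det (matrix_inv B)) = Re (det A) / Re (det B)"
    by (metis Re_complex_of_real of_real_divide divide_inverse)
  then show ?thesis using pos_def_det(1)[OF A] pos_def_det(1)[OF B] by (simp add: ln_div)
qed

lemma negrate_eq_ln_det_ratio:
  assumes s: "s > 0"
  shows "negrate H s gk V = ln (Re (det (interf_covar H s gk V))) - ln (Re (det (covar H s V)))"
proof -
  define R where "R = interf_covar H s gk V"
  have R: "pos_def R" unfolding R_def using pos_def_interf_covar[OF s] .
  have "Jmat H s gk V = matrix_inv R" unfolding Jmat_def R_def interf_covar_def ..
  then have "mat 1 + H ** V gk ** cH (V gk) ** cH H ** Jmat H s gk V = covar H s V ** matrix_inv R"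
    using pos_def_invertible[OF R]
    by (simp add: covar_eq_interf_covar[of H s V gk] R_def[symmetric] cH_sandwich
        matrix_add_rdistrib matrix_inv_right matrix_mul_assoc)
  then have "negrate H s gk V = - ln (Re (det (covar H s V) * det (matrix_inv R)))"
    by (simp add: negrate_def det_mul)
  then show ?thesis
    unfolding ln_Re_det_mult_matrix_inv[OF pos_def_covar[OF s] R] by (simp add: R_def)
qed

lemma ln_det_mmse_matrix:
  assumes s: "s > 0"
  shows "ln (Re (det (mmse_matrix H s gk V))) = negrate H s gk V"
proof -
  define R where "R = interf_covar H s gk V"
  define C where "C = covar H s V"
  define X where "X = H ** V gk"
  have R: "pos_def R" unfolding R_def using pos_def_interf_covar[OF s] .
  have C: "pos_def C" unfolding C_def using pos_def_covar[OF s] .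
  have inv: "invertible C" using pos_def_invertible[OF C] .
  have "mat 1 + (matrix_inv C ** X) ** (- cH X) = matrix_inv C ** R"
  proof -
    have "matrix_inv C ** R = matrix_inv C ** (C - X ** cH X)"
      using covar_eq_interf_covar[of H s V gk] by (simp add: C_def R_def X_def)
    also have "\<dots> = mat 1 - matrix_inv C ** X ** cH X"
      by (simp add: matrix_diff_ldistrib matrix_inv_left[OF inv] matrix_mul_assoc)
    finally show ?thesis by (simp add: matrix_uminus_right)
  qed
  moreover have "mmse_matrix H s gk V = mat 1 + (- cH X) ** (matrix_inv C ** X)"
    by (simp add: mmse_matrix_def C_def X_def matrix_uminus_left matrix_mul_assoc)
  ultimately have det: "det (mmse_matrix H s gk V) = det R * det (matrix_inv C)"
    by (simp add: det_one_plus_mult_commute[of "- cH X"] det_mul mult.commute)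
  show ?thesis
    unfolding det ln_Re_det_mult_matrix_inv[OF R C]
    by (simp add: negrate_eq_ln_det_ratio[OF s] R_def C_def)
qed

lemma Uhat_eq: "Uhat H s gk Vi = matrix_inv (covar H s Vi) ** (H ** Vi gk)"
  unfolding Uhat_def covar_def ..

lemma Qhat_eq_mmse_matrix:
  assumes s: "s > 0"
  shows "Qhat H s gk Vi = mmse_matrix H s gk Vi"
proof -
  have C: "pos_def (covar H s Vi)" using pos_def_covar[OF s] .
  then have "hermitian (covar H s Vi)" by (simp add: pos_def_def)
  from hermitian_matrix_inv[OF this pos_def_invertible[OF C]]
  have "cH (matrix_inv (covar H s Vi)) = matrix_inv (covar H s Vi)"
    by (simp add: hermitian_def)
  then show ?thesis
    unfolding Qhat_def mmse_matrix_def Uhat_eq by (simp add: cH_matrix_mult matrix_mul_assoc)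
qed

lemma pos_def_Qhat: "s > 0 \<Longrightarrow> pos_def (Qhat H s gk Vi)"
  by (simp add: Qhat_eq_mmse_matrix pos_def_mmse_matrix)

lemma trace_weighted_mse_matrix:
  fixes H :: "complex^'m^'n" and U W :: "complex^'n^'n" and V :: "'g::finite \<Rightarrow> complex^'n^'m"
  assumes "hermitian W"
  shows "(\<Sum>g\<in>UNIV. Re (trace (cH (V g) ** (cH H ** U ** W ** cH U ** H) ** V g)))
     + 2 * Re (trace (- (W ** cH U ** H) ** V gk))
     + Re (trace (W ** (mat 1 + s *\<^sub>R (cH U ** U))))
   = Re (trace (W ** mse_matrix H s gk U V))"
proof -
  define X where "X = H ** V gk"
  define F where "F g = H ** V g ** cH (V g) ** cH H" for g
  have quad: "trace (cH (V g) ** (cH H ** U ** W ** cH U ** H) ** V g)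
      = trace (W ** (cH U ** F g ** U))" for g
    using trace_mul_sym[of "W ** cH U ** H ** V g" "cH (V g) ** cH H ** U"]
    by (simp add: matrix_mul_assoc F_def)
  have "trace (W ** (cH X ** U)) = trace (cH (W ** (cH U ** X)))"
    using assms trace_mul_sym[of W "cH X ** U"]
    by (simp add: hermitian_def cH_matrix_mult matrix_mul_assoc)
  then have cross: "Re (trace (W ** (cH X ** U))) = Re (trace (W ** (cH U ** X)))"
    by (simp add: trace_cH)
  have lin: "trace (- (W ** cH U ** H) ** V gk) = - trace (W ** (cH U ** X))"
    by (simp add: matrix_uminus_left trace_uminus X_def matrix_mul_assoc)
  have const: "trace (W ** (mat 1 + s *\<^sub>R (cH U ** U))) = trace W + s *\<^sub>R trace (W ** (cH U ** U))"
    by (simp add: matrix_add_ldistrib matrix_scaleR_right trace_add trace_scaleR)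
  have "W ** (cH U ** covar H s V ** U)
      = (\<Sum>g\<in>UNIV. W ** (cH U ** F g ** U)) + s *\<^sub>R (W ** (cH U ** U))"
    unfolding covar_def F_def[symmetric]
    by (simp add: matrix_add_ldistrib matrix_add_rdistrib matrix_sum_right matrix_sum_left
        matrix_scaleR_right matrix_scaleR_left)
  then have cov: "trace (W ** (cH U ** covar H s V ** U))
      = (\<Sum>g\<in>UNIV. trace (W ** (cH U ** F g ** U))) + s *\<^sub>R trace (W ** (cH U ** U))"
    by (simp add: trace_add trace_sum trace_scaleR)
  have "trace (W ** mse_matrix H s gk U V) = trace W - trace (W ** (cH U ** X))
      - trace (W ** (cH X ** U)) + trace (W ** (cH U ** covar H s V ** U))"
    unfolding mse_matrix_def X_def[symmetric]
    by (simp add: matrix_add_ldistrib matrix_diff_ldistrib trace_add trace_sub)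
  then show ?thesis
    unfolding cov lin const using quad cross by (simp add: Re_sum)
qed

lemma hsur_eq_weighted_mse:
  fixes H :: "complex^'m^'n"
  assumes s: "s > 0"
  shows "hsur H s gk Vi V = Re (trace (matrix_inv (Qhat H s gk Vi) ** mse_matrix H s gk (Uhat H s gk Vi) V))
     + ln (Re (det (Qhat H s gk Vi))) - real CARD('n)"
proof -
  have "hermitian (matrix_inv (Qhat H s gk Vi))"
    using pos_def_matrix_inv[OF pos_def_Qhat[OF s, of H gk Vi]] by (simp add: pos_def_def)
  from trace_weighted_mse_matrix[OF this, of V H "Uhat H s gk Vi" gk s] show ?thesis
    unfolding hsur_def Ahat_def Bhat_def bhat_def by simp
qed

theorem negrate_le_hsur:
  fixes H :: "complex^'m^'n"
  assumes s: "s > 0"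
  shows "negrate H s gk V \<le> hsur H s gk Vi V"
proof -
  define E where "E = mse_matrix H s gk (Uhat H s gk Vi) V"
  define P where "P = cH (Uhat H s gk Vi - matrix_inv (covar H s V) ** (H ** V gk)) ** covar H s V
    ** (Uhat H s gk Vi - matrix_inv (covar H s V) ** (H ** V gk))"
  have E0: "pos_def (mmse_matrix H s gk V)" using pos_def_mmse_matrix[OF s] .
  have P: "pos_semidef P"
    unfolding P_def by (intro pos_semidef_congruence pos_def_imp_pos_semidef pos_def_covar s)
  have EP: "E = mmse_matrix H s gk V + P"
    unfolding E_def P_def by (rule mse_matrix_eq_mmse_matrix_plus[OF s])
  have "pos_def E"
    unfolding EP using pos_semidef_add_pos_def[OF P E0] by (simp add: add.commute)
  then have "ln (Re (det E)) \<le> hsur H s gk Vi V"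
    using ln_det_le_trace[OF pos_def_Qhat[OF s, of H gk Vi]] hsur_eq_weighted_mse[OF s, of H gk Vi V]
    by (simp add: E_def)
  moreover have "ln (Re (det (mmse_matrix H s gk V))) \<le> ln (Re (det E))"
    using det_le_det_add_pos_semidef[OF E0 P] pos_def_det(1)[OF E0] EP by simp
  ultimately show ?thesis using ln_det_mmse_matrix[OF s, of H gk V] by simp
qed

theorem hsur_eq_negrate:
  fixes H :: "complex^'m^'n"
  assumes s: "s > 0"
  shows "hsur H s gk Vi Vi = negrate H s gk Vi"
proof -
  define Q where "Q = Qhat H s gk Vi"
  have "mse_matrix H s gk (Uhat H s gk Vi) Vi = Q"
    using mse_matrix_eq_mmse_matrix_plus[OF s, of H gk "Uhat H s gk Vi" Vi]
      Qhat_eq_mmse_matrix[OF s, of H gk Vi]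
    by (simp add: Uhat_eq Q_def)
  then have "hsur H s gk Vi Vi = Re (trace (matrix_inv Q ** Q)) + ln (Re (det Q)) - real CARD('n)"
    using hsur_eq_weighted_mse[OF s, of H gk Vi Vi] by (simp add: Q_def)
  also have "matrix_inv Q ** Q = mat 1"
    unfolding Q_def using matrix_inv_left[OF pos_def_invertible[OF pos_def_Qhat[OF s, of H gk Vi]]] .
  finally show ?thesis
    using ln_det_mmse_matrix[OF s, of H gk Vi] Qhat_eq_mmse_matrix[OF s, of H gk Vi]
    by (simp add: trace_I Q_def)
qed

section \<open>Convexity of the surrogate\<close>

lemma trace_congruence_nonneg:
  assumes "pos_semidef A" shows "0 \<le> Re (trace (cH Y ** A ** (Y::complex^'n^'m)))"
proof -
  have "(cH Y ** A ** Y) $ j $ j = cinner (column j Y) (A *v column j Y)" for j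
  proof -
    have "(cH Y ** A ** Y) $ j $ j = (\<Sum>k\<in>UNIV. \<Sum>i\<in>UNIV. cnj (Y$i$j) * A$i$k * Y$k$j)"
      by (simp add: matrix_matrix_mult_def sum_distrib_right)
    also have "\<dots> = (\<Sum>i\<in>UNIV. \<Sum>k\<in>UNIV. cnj (Y$i$j) * A$i$k * Y$k$j)" by (rule sum.swap)
    finally show ?thesis
      by (simp add: cinner_def matrix_vector_mult_def column_def sum_distrib_left mult.assoc)
  qed
  then show ?thesis
    using assms unfolding trace_def by (auto simp: Re_sum pos_semidef_def intro!: sum_nonneg)
qed

lemma pos_semidef_Ahat:
  assumes "s > 0" shows "pos_semidef (Ahat H s gk Vi)"
proof -
  have "Ahat H s gk Vi = cH (cH (Uhat H s gk Vi) ** H) ** matrix_inv (Qhat H s gk Vi)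
      ** (cH (Uhat H s gk Vi) ** H)"
    unfolding Ahat_def by (simp add: cH_matrix_mult matrix_mul_assoc)
  then show ?thesis
    using pos_semidef_congruence[OF pos_def_imp_pos_semidef[OF pos_def_matrix_inv[OF
          pos_def_Qhat[OF assms]]]] by simp
qed

lemma Re_trace_quadratic_line:
  fixes P Q :: "complex^'n^'m" and A :: "complex^'m^'m"
  shows "Re (trace (cH (P + t *\<^sub>R Q) ** A ** (P + t *\<^sub>R Q)))
    = Re (trace (cH P ** A ** P)) + t * (Re (trace (cH Q ** A ** P)) + Re (trace (cH P ** A ** Q)))
      + t\<^sup>2 * Re (trace (cH Q ** A ** Q))"
proof -
  have "cH (P + t *\<^sub>R Q) ** A ** (P + t *\<^sub>R Q)
     = cH P ** A ** P + t *\<^sub>R (cH Q ** A ** P + cH P ** A ** Q) + (t * t) *\<^sub>R (cH Q ** A ** Q)"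
    by (simp add: cH_add cH_scaleR matrix_add_ldistrib matrix_add_rdistrib matrix_scaleR_left
        matrix_scaleR_right scaleR_add_right)
  then show ?thesis by (simp add: trace_add trace_scaleR power2_eq_square algebra_simps)
qed

lemma Re_trace_linear_line:
  fixes B :: "complex^'m^'n" and P Q :: "complex^'n^'m"
  shows "Re (trace (B ** (P + t *\<^sub>R Q))) = Re (trace (B ** P)) + t * Re (trace (B ** Q))"
  by (simp add: matrix_add_ldistrib matrix_scaleR_right trace_add trace_scaleR)

lemma hsur_along_line:
  "hsur H s gk Vi (\<lambda>g. V g + t *\<^sub>R W g)
   = (\<Sum>g\<in>UNIV. Re (trace (cH (W g) ** Ahat H s gk Vi ** W g))) * t\<^sup>2
   + ((\<Sum>g\<in>UNIV. Re (trace (cH (W g) ** Ahat H s gk Vi ** V g))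
        + Re (trace (cH (V g) ** Ahat H s gk Vi ** W g)))
      + 2 * Re (trace (Bhat H s gk Vi ** W gk))) * t
   + hsur H s gk Vi V"
  unfolding hsur_def Re_trace_quadratic_line
  unfolding Re_trace_linear_line
  by (simp add: sum.distrib sum_distrib_left sum_distrib_right algebra_simps)

lemma hsur_quadratic_along_line:
  assumes "s > 0"
  shows "\<exists>a b c. a \<ge> 0 \<and> (\<forall>t::real. hsur H s gk Vi (\<lambda>g. V g + t *\<^sub>R W g) = a * t\<^sup>2 + b * t + c)"
proof -
  have "0 \<le> (\<Sum>g\<in>UNIV. Re (trace (cH (W g) ** Ahat H s gk Vi ** W g)))"
    by (intro sum_nonneg trace_congruence_nonneg pos_semidef_Ahat[OF assms])
  then show ?thesis using hsur_along_line[of H s gk Vi V _ W] by blast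
qed

lemma hsur_convex:
  assumes "s > 0" and t: "0 \<le> t" "t \<le> 1"
  shows "hsur H s gk Vi (\<lambda>g. (1 - t) *\<^sub>R V g + t *\<^sub>R W g)
         \<le> (1 - t) * hsur H s gk Vi V + t * hsur H s gk Vi W"
proof -
  obtain a b c where a: "a \<ge> 0"
    and abc: "\<And>t::real. hsur H s gk Vi (\<lambda>g. V g + t *\<^sub>R (W g - V g)) = a * t\<^sup>2 + b * t + c"
    using hsur_quadratic_along_line[OF assms(1), of H gk Vi V "\<lambda>g. W g - V g"] by blast
  have line: "(\<lambda>g. (1 - t) *\<^sub>R V g + t *\<^sub>R W g) = (\<lambda>g. V g + t *\<^sub>R (W g - V g))"
    by (simp add: fun_eq_iff algebra_simps)
  have "hsur H s gk Vi V = c" "hsur H s gk Vi W = a + b + c"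
    using abc[of 0] abc[of 1] by simp_all
  moreover have "0 \<le> a * (t * (1 - t))" using a t by simp
  ultimately show ?thesis unfolding line abc by (simp add: power2_eq_square algebra_simps)
qed

section \<open>Equal directional derivatives at the point of tangency\<close>

lemma DERIV_eq_if_touching:
  fixes f h :: "real \<Rightarrow> real"
  assumes h: "(h has_real_derivative D) (at x)" and f: "f differentiable (at x)"
    and le: "\<And>y. f y \<le> h y" and eq: "f x = h x"
  shows "(f has_real_derivative D) (at x)"
proof -
  obtain D' where f': "(f has_real_derivative D') (at x)"
    using f by (auto simp: real_differentiable_def)
  have "\<forall>y. \<bar>x - y\<bar> < 1 \<longrightarrow> h x - f x \<le> h y - f y" using le eq by (simp add: le_diff_eq)
  then have "D - D' = 0" using DERIV_local_min[OF DERIV_diff[OF h f'], of 1] by simp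
  with f' show ?thesis by simp
qed

lemma differentiable_negrate_along_line:
  assumes s: "s > 0"
  shows "(\<lambda>t. negrate H s gk (\<lambda>g. V g + t *\<^sub>R W g)) differentiable (at 0)"
proof -
  have "entrywise_differentiable (\<lambda>t. interf_covar H s gk (\<lambda>g. V g + t *\<^sub>R W g)) 0"
    "entrywise_differentiable (\<lambda>t. covar H s (\<lambda>g. V g + t *\<^sub>R W g)) 0"
    unfolding interf_covar_def covar_def
    by (intro entrywise_differentiable_add entrywise_differentiable_sum entrywise_differentiable_mult
        entrywise_differentiable_const entrywise_differentiable_cH entrywise_differentiable_line;
        simp)+
  then show ?thesis
    unfolding negrate_eq_ln_det_ratio[OF s]
    by (intro differentiable_diff differentiable_ln_det pos_def_interf_covar pos_def_covar s)
qed

lemma hsur_negrate_derivative_along_line: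
  fixes H :: "complex^'m^'n"
  assumes s: "s > 0"
  shows "\<exists>D. ((\<lambda>t. hsur H s gk Vi (\<lambda>g. Vi g + t *\<^sub>R W g)) has_real_derivative D) (at 0)
          \<and> ((\<lambda>t. negrate H s gk (\<lambda>g. Vi g + t *\<^sub>R W g)) has_real_derivative D) (at 0)"
proof -
  obtain a b where "\<And>t. hsur H s gk Vi (\<lambda>g. Vi g + t *\<^sub>R W g) = a * t\<^sup>2 + b * t + hsur H s gk Vi Vi"
    using hsur_along_line[of H s gk Vi Vi _ W] by blast
  then have h: "((\<lambda>t. hsur H s gk Vi (\<lambda>g. Vi g + t *\<^sub>R W g)) has_real_derivative b) (at 0)"
    by (auto intro!: derivative_eq_intros)
  have "((\<lambda>t. negrate H s gk (\<lambda>g. Vi g + t *\<^sub>R W g)) has_real_derivative b) (at 0)"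
    by (rule DERIV_eq_if_touching[OF h differentiable_negrate_along_line[OF s]])
      (simp_all add: negrate_le_hsur[OF s] hsur_eq_negrate[OF s])
  with h show ?thesis by blast
qed

lemma perturb_eq_line:
  "perturb V g a b (c * of_real t)
   = (\<lambda>g'. V g' + t *\<^sub>R (if g' = g then (\<chi> i j. if i = a \<and> j = b then c else 0) else 0))"
proof -
  have "(\<chi> i j. if i = a \<and> j = b then c * complex_of_real t else 0)
      = t *\<^sub>R (\<chi> i j. if i = a \<and> j = b then c else 0)"
  proof -
    have "t *\<^sub>R z = z * complex_of_real t" for z :: complex
      by (simp add: scaleR_conv_of_real mult.commute)
    then show ?thesis by (simp add: vec_eq_iff)
  qed
  then show ?thesis by (auto simp: perturb_def)
qed

theorem mainTheorem3:
  fixes H :: "'k \<Rightarrow> complex^'m::finite^'n::finite"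
    and sigma2 :: "'k \<Rightarrow> real"
    and gsel :: "'k \<Rightarrow> 'g::finite"
    and k :: 'k
    and Vi :: "'g \<Rightarrow> complex^'n^'m"
  assumes MN: "CARD('m) > CARD('n)"
    and sig: "\<forall>k. sigma2 k > 0"
  shows
    "(\<forall>V. hsur (H k) (sigma2 k) (gsel k) Vi V \<ge> negrate (H k) (sigma2 k) (gsel k) V)
   \<and> hsur (H k) (sigma2 k) (gsel k) Vi Vi = negrate (H k) (sigma2 k) (gsel k) Vi
   \<and> (\<forall>g a b. (\<exists>D. ((\<lambda>t. hsur (H k) (sigma2 k) (gsel k) Vi (perturb Vi g a b (complex_of_real t)))
                        has_real_derivative D) (at 0)
               \<and> ((\<lambda>t. negrate (H k) (sigma2 k) (gsel k) (perturb Vi g a b (complex_of_real t)))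
                        has_real_derivative D) (at 0))
           \<and> (\<exists>D. ((\<lambda>t. hsur (H k) (sigma2 k) (gsel k) Vi (perturb Vi g a b (\<i> * complex_of_real t)))
                        has_real_derivative D) (at 0)
               \<and> ((\<lambda>t. negrate (H k) (sigma2 k) (gsel k) (perturb Vi g a b (\<i> * complex_of_real t)))
                        has_real_derivative D) (at 0)))
   \<and> (\<forall>V W. \<exists>a b c. a \<ge> 0 \<and>
         (\<forall>t::real. hsur (H k) (sigma2 k) (gsel k) Vi (\<lambda>g. V g + t *\<^sub>R W g) = a * t\<^sup>2 + b * t + c))
   \<and> (\<forall>V W (t::real). 0 \<le> t \<longrightarrow> t \<le> 1 \<longrightarrow>
         hsur (H k) (sigma2 k) (gsel k) Vi (\<lambda>g. (1 - t) *\<^sub>R V g + t *\<^sub>R W g)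
         \<le> (1 - t) * hsur (H k) (sigma2 k) (gsel k) Vi V + t * hsur (H k) (sigma2 k) (gsel k) Vi W)"
proof -
  have s: "sigma2 k > 0" using sig by blast
  have entry_derivatives:
    "\<exists>D. ((\<lambda>t. hsur (H k) (sigma2 k) (gsel k) Vi (perturb Vi g a b (c * of_real t)))
            has_real_derivative D) (at 0)
       \<and> ((\<lambda>t. negrate (H k) (sigma2 k) (gsel k) (perturb Vi g a b (c * of_real t)))
            has_real_derivative D) (at 0)" for g a b c
    unfolding perturb_eq_line by (rule hsur_negrate_derivative_along_line[OF s])
  show ?thesis
  proof (intro conjI allI impI)
    show "negrate (H k) (sigma2 k) (gsel k) V \<le> hsur (H k) (sigma2 k) (gsel k) Vi V" for V
      by (rule negrate_le_hsur[OF s])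
    show "hsur (H k) (sigma2 k) (gsel k) Vi Vi = negrate (H k) (sigma2 k) (gsel k) Vi"
      by (rule hsur_eq_negrate[OF s])
  qed (use entry_derivatives[where c = 1, unfolded mult_1] entry_derivatives
      hsur_quadratic_along_line[OF s] hsur_convex[OF s] in blast)+
qed

end
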